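(* On $\overline{M_0}$ and on $\overline{M_{-1}}$ one has $\overline\delta\circ\overline{j^{aro}}=\overline{j^{aro}}\circ\overline\partial$.
   Context: Fix a finite set $C$ and a field of characteristic zero. Monomials $x^{\mathbf k}=\prod(x^a_j)^{k^a_j}$ in variables $x^a_j$ ($a\in C$, $j\ge-1$) have weight $\sum jk^a_j$, and $\mathbf k!=\prod k^a_j!$. $\overline{M_0}$ (resp. $\overline{M_{-1}}$) is a copy of the span of monomials of weight $\ge0$ (resp. $\ge-1$), the two copies being regarded as distinct. The transpose derivation is $\overline\partial x^{\mathbf k}=\sum_{j\ge0,a}k^a_jx^{\mathbf k-\mathbf e^a_j+\mathbf e^a_{j-1}}$ (acting within each copy). A tree (resp. aroma) is a finite connected directed graph with $C$-decorated vertices in which every vertex has exactly one outgoing edge except one root (resp. every vertex has exactly one outgoing edge). A tree or aroma with free edges assigns to each vertex $v$ a number $r_v\ge0$ of free edges; objects are up to isomorphism preserving decorations and the $r_v$; $\sigma(\tau)$ is the number of such automorphisms. $\overline\delta=\sum_v\overline\delta_v$ where $\overline\delta_v$ removes one free edge at $v$ (zero if $r_v=0$). With $f(v)$ the number of non-free edges ending at $v$, $\overline\Phi(\tau)=\prod_vx^{d(v)}_{f(v)+r_v-1}$. Define $\overline{j^{aro}}(x^{\kappa})=\sum_{a}\frac{\kappa!}{\sigma(a)}a$ for $x^\kappa\in\overline{M_0}$, summing over aromas with free edges with $\overline\Phi(a)=x^\kappa$, and $\overline{j^{aro}}(x^{\mathbf k})=\sum_t\frac{\mathbf k!}{\sigma(t)}t$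 for $x^{\mathbf k}\in\overline{M_{-1}}$, summing over trees with free edges with $\overline\Phi(t)=x^{\mathbf k}$ (empty sums are $0$), extended linearly. *)

theory Defs
  imports Main "HOL-Library.FuncSet"
begin

text \<open>A monomial x^k is represented by its exponent function k on pairs (a,j);
  it is a genuine monomial iff it has finite support and k(a,j) = 0 for j < -1.\<close>

type_synonym 'c expo = "'c \<times> int \<Rightarrow> nat"

definition is_monom :: "'c expo \<Rightarrow> bool" where
  "is_monom k \<longleftrightarrow> finite {v. k v \<noteq> 0} \<and> (\<forall>a j. j < -1 \<longrightarrow> k (a, j) = 0)"

definition weight :: "'c expo \<Rightarrow> int" where
  "weight k = (\<Sum>v\<in>{v. k v \<noteq> 0}. snd v * int (k v))"

definition mfact :: "'c expo \<Rightarrow> nat" where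
  "mfact k = (\<Prod>v\<in>{v. k v \<noteq> 0}. fact (k v))"

text \<open>Linear combinations (over a field 'k) of elements of type 'b are
  finitely supported functions 'b => 'k; linear extension of a map on basis elements:\<close>

definition lin_ext :: "('b \<Rightarrow> 'd \<Rightarrow> 'k::comm_ring_1) \<Rightarrow> ('b \<Rightarrow> 'k) \<Rightarrow> ('d \<Rightarrow> 'k)" where
  "lin_ext F L = (\<lambda>y. \<Sum>x\<in>{x. L x \<noteq> 0}. L x * F x y)"

definition fin_supp :: "('b \<Rightarrow> 'k::zero) \<Rightarrow> bool" where
  "fin_supp L \<longleftrightarrow> finite {x. L x \<noteq> 0}"

definition shift :: "'c expo \<Rightarrow> 'c \<Rightarrow> int \<Rightarrow> 'c expo" where
  "shift k a j = k((a, j) := k (a, j) - 1, (a, j - 1) := k (a, j - 1) + 1)"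

definition dbar_mono :: "'c expo \<Rightarrow> 'c expo \<Rightarrow> 'k::comm_ring_1" where
  "dbar_mono k k' = (\<Sum>p\<in>{(a, j). j \<ge> 0 \<and> k (a, j) > 0 \<and> k' = shift k a j}. of_nat (k p))"

definition dbar :: "('c expo \<Rightarrow> 'k::comm_ring_1) \<Rightarrow> ('c expo \<Rightarrow> 'k)" where
  "dbar = lin_ext dbar_mono"

text \<open>Concrete labelled graph on vertices {0..<nv g}: out v = Some w is the unique
  outgoing (non-free) edge v -> w, None if v has no outgoing edge; dec v is the
  decoration; fr v = r_v is the number of free edges at v.\<close>

datatype 'c fg = FG (nv: nat) (out: "nat \<Rightarrow> nat option") (dec: "nat \<Rightarrow> 'c") (fr: "nat \<Rightarrow> nat")

definition wf_fg :: "'c fg \<Rightarrow> bool" where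
  "wf_fg g \<longleftrightarrow> (\<forall>v<nv g. \<forall>w. out g v = Some w \<longrightarrow> w < nv g)"

definition adj :: "'c fg \<Rightarrow> (nat \<times> nat) set" where
  "adj g = {(v, w). v < nv g \<and> w < nv g \<and> (out g v = Some w \<or> out g w = Some v)}"

definition connected_fg :: "'c fg \<Rightarrow> bool" where
  "connected_fg g \<longleftrightarrow> nv g \<ge> 1 \<and> (\<forall>v<nv g. \<forall>w<nv g. (v, w) \<in> (adj g)\<^sup>*)"

definition is_tree :: "'c fg \<Rightarrow> bool" where
  "is_tree g \<longleftrightarrow> wf_fg g \<and> connected_fg g \<and> card {v. v < nv g \<and> out g v = None} = 1"

definition is_aroma :: "'c fg \<Rightarrow> bool" where
  "is_aroma g \<longleftrightarrow> wf_fg g \<and> connected_fg g \<and> (\<forall>v<nv g. out g v \<noteq> None)"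

definition preserves :: "'c fg \<Rightarrow> 'c fg \<Rightarrow> (nat \<Rightarrow> nat) \<Rightarrow> bool" where
  "preserves g h p \<longleftrightarrow> (\<forall>v<nv g. map_option p (out g v) = out h (p v)
      \<and> dec h (p v) = dec g v \<and> fr h (p v) = fr g v)"

definition iso_fg :: "'c fg \<Rightarrow> 'c fg \<Rightarrow> bool" where
  "iso_fg g h \<longleftrightarrow> nv g = nv h \<and> (\<exists>p. bij_betw p {0..<nv g} {0..<nv h} \<and> preserves g h p)"

text \<open>Isomorphism class of g (the objects of the paper are these classes).\<close>
definition cls :: "'c fg \<Rightarrow> 'c fg set" where
  "cls g = {h. wf_fg h \<and> iso_fg g h}"

definition rep :: "'c fg set \<Rightarrow> 'c fg" where
  "rep T = (SOME g. g \<in> T)"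

definition auts :: "'c fg \<Rightarrow> (nat \<Rightarrow> nat) set" where
  "auts g = {p \<in> {0..<nv g} \<rightarrow>\<^sub>E {0..<nv g}. bij_betw p {0..<nv g} {0..<nv g} \<and> preserves g g p}"

definition sigma :: "'c fg set \<Rightarrow> nat" where
  "sigma T = card (auts (rep T))"

text \<open>f(v): number of non-free edges ending at v.\<close>
definition indeg :: "'c fg \<Rightarrow> nat \<Rightarrow> nat" where
  "indeg g v = card {w. w < nv g \<and> out g w = Some v}"

text \<open>Phi(g) = prod_v x^{d(v)}_{f(v)+r_v-1}, as an exponent function.\<close>
definition Phi :: "'c fg \<Rightarrow> 'c expo" where
  "Phi g = (\<lambda>(a, j). card {v. v < nv g \<and> dec g v = a \<and> int (indeg g v + fr g v) - 1 = j})"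

definition is_aroma_class :: "'c fg set \<Rightarrow> bool" where
  "is_aroma_class T \<longleftrightarrow> (\<exists>g. is_aroma g \<and> T = cls g)"

definition is_tree_class :: "'c fg set \<Rightarrow> bool" where
  "is_tree_class T \<longleftrightarrow> (\<exists>g. is_tree g \<and> T = cls g)"

definition remove_free :: "'c fg \<Rightarrow> nat \<Rightarrow> 'c fg" where
  "remove_free g v = FG (nv g) (out g) (dec g) ((fr g)(v := fr g v - 1))"

definition delta_cls :: "'c fg set \<Rightarrow> 'c fg set \<Rightarrow> 'k::comm_ring_1" where
  "delta_cls T T' = of_nat (card {v. v < nv (rep T) \<and> fr (rep T) v > 0
                                    \<and> cls (remove_free (rep T) v) = T'})"

definition delta :: "('c fg set \<Rightarrow> 'k::comm_ring_1) \<Rightarrow> ('c fg set \<Rightarrow> 'k)" where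
  "delta = lin_ext delta_cls"

definition jaro0_mono :: "'c expo \<Rightarrow> 'c fg set \<Rightarrow> 'k::field" where
  "jaro0_mono k T = (if is_aroma_class T \<and> Phi (rep T) = k
                      then of_nat (mfact k) / of_nat (sigma T) else 0)"

definition jaro1_mono :: "'c expo \<Rightarrow> 'c fg set \<Rightarrow> 'k::field" where
  "jaro1_mono k T = (if is_tree_class T \<and> Phi (rep T) = k
                      then of_nat (mfact k) / of_nat (sigma T) else 0)"

definition jaro0 :: "('c expo \<Rightarrow> 'k::field) \<Rightarrow> ('c fg set \<Rightarrow> 'k)" where
  "jaro0 = lin_ext jaro0_mono"

definition jaro1 :: "('c expo \<Rightarrow> 'k::field) \<Rightarrow> ('c fg set \<Rightarrow> 'k)" where
  "jaro1 = lin_ext jaro1_mono"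

text \<open>Elements of M_0-bar / M_{-1}-bar: finite linear combinations of monomials
  of weight >= 0 / >= -1.\<close>
definition in_M :: "int \<Rightarrow> ('c expo \<Rightarrow> 'k::zero) \<Rightarrow> bool" where
  "in_M m L \<longleftrightarrow> fin_supp L \<and> (\<forall>k. L k \<noteq> 0 \<longrightarrow> is_monom k \<and> weight k \<ge> m)"

end

(* Both sides are linear, so it suffices to compare the coefficients of one class T' (represented
   by g') in the images of one monomial x^k.  On the left, a class T with Phi(T) = x^k contributes
   k!/sigma(T) times the number of free edges of T whose removal yields T'.  Pairs (u, p) of a vertex
   u and an isomorphism p from T minus a free edge at u onto g' are the same as pairs (p u, p) with
   p an isomorphism from T onto g' plus a free edge at p u; counting both sides gives
   #removals / sigma(T) = #{v. g' + free edge at v ~ T} / sigma(T').  Summing over T, the left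
   coefficient is k!/sigma(T') times #{v. Phi(g' + free edge at v) = x^k}.  A free edge added at a
   vertex labelled x^a_(j-1) replaces this factor of Phi(g') by x^a_j, which is exactly what the
   transpose derivation undoes, and the factorials match because k! K^a_(j-1) = k^a_j K! for
   K = Phi(g'). *)

theory Submission
  imports Defs
begin

section \<open>Linear extension\<close>

lemma lin_ext_eq_sum:
  assumes "finite A" and "{x. L x \<noteq> 0} \<subseteq> A"
  shows "lin_ext F L y = (\<Sum>x\<in>A. L x * F x y)"
  unfolding lin_ext_def using assms by (intro sum.mono_neutral_left) auto

lemma lin_ext_cong: "(\<And>x. L x \<noteq> 0 \<Longrightarrow> F x = F' x) \<Longrightarrow> lin_ext F L = lin_ext F' L"
  unfolding lin_ext_def by (intro ext sum.cong) auto

lemma lin_ext_lin_ext: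
  fixes L :: "'a \<Rightarrow> 'k::comm_ring_1"
  assumes "fin_supp L" and "\<And>x. L x \<noteq> 0 \<Longrightarrow> fin_supp (G x)"
  shows "lin_ext F (lin_ext G L) = lin_ext (\<lambda>x. lin_ext F (G x)) L"
proof
  fix y
  define A where "A = {x. L x \<noteq> 0}"
  define W where "W = (\<Union>x\<in>A. {z. G x z \<noteq> 0})"
  have "finite A" and "finite W"
    using assms unfolding A_def W_def fin_supp_def by auto
  have "{z. lin_ext G L z \<noteq> 0} \<subseteq> W"
  proof
    fix z assume "z \<in> {z. lin_ext G L z \<noteq> 0}"
    then obtain x where "x \<in> A" "L x * G x z \<noteq> 0"
      unfolding lin_ext_def A_def[symmetric] by (auto elim: sum.not_neutral_contains_not_neutral)
    then show "z \<in> W"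
      unfolding W_def by (auto simp del: mult_eq_0_iff intro: bexI[of _ x])
  qed
  then have "lin_ext F (lin_ext G L) y = (\<Sum>z\<in>W. (\<Sum>x\<in>A. L x * G x z) * F z y)"
    using \<open>finite W\<close> by (simp add: lin_ext_eq_sum) (simp add: lin_ext_def A_def)
  also have "\<dots> = (\<Sum>x\<in>A. L x * (\<Sum>z\<in>W. G x z * F z y))"
    by (simp add: sum_distrib_left sum_distrib_right mult.assoc sum.swap[of _ W])
  also have "\<dots> = (\<Sum>x\<in>A. L x * lin_ext F (G x) y)"
    using \<open>finite W\<close> by (intro sum.cong refl arg_cong[where f = "(*) _"] lin_ext_eq_sum[symmetric])
      (auto simp: W_def)
  also have "\<dots> = lin_ext (\<lambda>x. lin_ext F (G x)) L y"
    unfolding lin_ext_def A_def ..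
  finally show "lin_ext F (lin_ext G L) y = lin_ext (\<lambda>x. lin_ext F (G x)) L y" .
qed

section \<open>Isomorphisms and automorphisms\<close>

lemma preserves_cong:
  assumes "wf_fg g" and "\<And>v. v < nv g \<Longrightarrow> p v = q v"
  shows "preserves g h p \<longleftrightarrow> preserves g h q"
proof -
  have "map_option p (out g v) = map_option q (out g v)" if "v < nv g" for v
    using assms that unfolding wf_fg_def by (cases "out g v") auto
  then show ?thesis
    using assms(2) unfolding preserves_def by auto
qed

lemma preserves_comp:
  assumes "preserves g h p" and "preserves h k q" and "\<And>v. v < nv g \<Longrightarrow> p v < nv h"
  shows "preserves g k (q \<circ> p)"
  using assms unfolding preserves_def by (auto simp: option.map_comp[symmetric])

lemma preserves_inv_into:
  assumes "wf_fg g" and "bij_betw p {0..<nv g} {0..<nv h}" and "preserves g h p"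
  shows "preserves h g (inv_into {0..<nv g} p)"
  unfolding preserves_def
proof (intro allI impI)
  fix w assume "w < nv h"
  define v where "v = inv_into {0..<nv g} p w"
  have v: "v < nv g" "p v = w"
    using \<open>w < nv h\<close> bij_betwE[OF bij_betw_inv_into[OF assms(2)]]
      bij_betw_inv_into_right[OF assms(2)] unfolding v_def by auto
  have inj: "inj_on p {0..<nv g}"
    using assms(2) by (rule bij_betw_imp_inj_on)
  have "map_option p (out g v) = out h w" "dec h w = dec g v" "fr h w = fr g v"
    using assms(3) v unfolding preserves_def by auto
  moreover have "map_option (inv_into {0..<nv g} p) (map_option p (out g v)) = out g v"
    using assms(1) v(1) inj unfolding wf_fg_def by (cases "out g v") auto
  ultimately show "map_option (inv_into {0..<nv g} p) (out h w) = out g (inv_into {0..<nv g} p w)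
      \<and> dec g (inv_into {0..<nv g} p w) = dec h w \<and> fr g (inv_into {0..<nv g} p w) = fr h w"
    unfolding v_def[symmetric] by simp
qed

definition isos :: "'c fg \<Rightarrow> 'c fg \<Rightarrow> (nat \<Rightarrow> nat) set" where
  "isos g h = {p \<in> {0..<nv g} \<rightarrow>\<^sub>E {0..<nv h}.
     bij_betw p {0..<nv g} {0..<nv h} \<and> preserves g h p}"

lemma auts_eq_isos: "auts g = isos g g"
  unfolding auts_def isos_def ..

lemma finite_isos: "finite (isos g h)"
  by (rule finite_subset[of _ "{0..<nv g} \<rightarrow>\<^sub>E {0..<nv h}"]) (auto simp: isos_def finite_PiE)

lemma iso_fg_iff_isos:
  assumes "wf_fg g"
  shows "iso_fg g h \<longleftrightarrow> isos g h \<noteq> {}"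
proof
  assume "iso_fg g h"
  then obtain p where p: "bij_betw p {0..<nv g} {0..<nv h}" "preserves g h p"
    unfolding iso_fg_def by auto
  then have "restrict p {0..<nv g} \<in> isos g h"
    using preserves_cong[OF assms, of p "restrict p {0..<nv g}"] bij_betwE[OF p(1)]
    unfolding isos_def by auto
  then show "isos g h \<noteq> {}" by blast
next
  assume "isos g h \<noteq> {}"
  then obtain p where "bij_betw p {0..<nv g} {0..<nv h}" "preserves g h p"
    unfolding isos_def by auto
  moreover have "nv g = nv h"
    using bij_betw_same_card[OF \<open>bij_betw p _ _\<close>] by simp
  ultimately show "iso_fg g h"
    unfolding iso_fg_def by auto
qed

lemma compose_isos:
  assumes "wf_fg g" and "p \<in> isos g h" and "q \<in> isos h k"
  shows "compose {0..<nv g} q p \<in> isos g k"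
proof -
  have "preserves g k (q \<circ> p)"
    using assms(2,3) by (intro preserves_comp) (auto simp: isos_def)
  then have "preserves g k (compose {0..<nv g} q p)"
    using preserves_cong[OF assms(1), of "compose {0..<nv g} q p" "q \<circ> p"]
    by (simp add: compose_eq)
  moreover have "compose {0..<nv g} q p \<in> {0..<nv g} \<rightarrow>\<^sub>E {0..<nv k}"
    using assms(2,3) unfolding isos_def by (auto simp: compose_def PiE_mem)
  ultimately show ?thesis
    using assms(2,3) unfolding isos_def by (auto simp: bij_betw_compose)
qed

definition inv_iso :: "'c fg \<Rightarrow> 'c fg \<Rightarrow> (nat \<Rightarrow> nat) \<Rightarrow> nat \<Rightarrow> nat" where
  "inv_iso g h p = (\<lambda>w\<in>{0..<nv h}. inv_into {0..<nv g} p w)"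

lemma inv_iso_isos:
  assumes "wf_fg g" and "wf_fg h" and "p \<in> isos g h"
  shows "inv_iso g h p \<in> isos h g"
proof -
  have p: "bij_betw p {0..<nv g} {0..<nv h}" "preserves g h p"
    using assms(3) by (auto simp: isos_def)
  have "preserves h g (inv_iso g h p)"
    using preserves_inv_into[OF assms(1) p] preserves_cong[OF assms(2), of "inv_iso g h p"]
    unfolding inv_iso_def by simp
  moreover have "bij_betw (inv_iso g h p) {0..<nv h} {0..<nv g}"
    unfolding inv_iso_def using bij_betw_inv_into[OF p(1)] by simp
  moreover have "inv_iso g h p \<in> {0..<nv h} \<rightarrow>\<^sub>E {0..<nv g}"
    unfolding inv_iso_def using bij_betwE[OF bij_betw_inv_into[OF p(1)]] by simp
  ultimately show ?thesis
    unfolding isos_def by simp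
qed

lemma iso_fg_refl: "iso_fg g g"
  unfolding iso_fg_def preserves_def by (auto intro!: exI[of _ id] simp: option.map_id)

lemma iso_fg_sym:
  assumes "wf_fg g" and "wf_fg h" and "iso_fg g h"
  shows "iso_fg h g"
  using assms inv_iso_isos iso_fg_iff_isos by blast

lemma iso_fg_trans:
  assumes "iso_fg g h" and "iso_fg h k"
  shows "iso_fg g k"
proof -
  obtain p where p: "bij_betw p {0..<nv g} {0..<nv h}" "preserves g h p"
    using assms(1) unfolding iso_fg_def by auto
  obtain q where q: "bij_betw q {0..<nv h} {0..<nv k}" "preserves h k q"
    using assms(2) unfolding iso_fg_def by auto
  have "preserves g k (q \<circ> p)"
    using p q bij_betwE[OF p(1)] by (intro preserves_comp) auto
  then show ?thesis
    using assms p q bij_betw_trans unfolding iso_fg_def by fastforce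
qed

lemma cls_eq_iff:
  assumes "wf_fg g" and "wf_fg h"
  shows "cls g = cls h \<longleftrightarrow> iso_fg g h"
  using assms iso_fg_refl iso_fg_sym iso_fg_trans unfolding cls_def by blast

lemma rep_cls:
  assumes "wf_fg g"
  shows "wf_fg (rep (cls g))" and "iso_fg g (rep (cls g))"
proof -
  have "g \<in> cls g"
    using assms iso_fg_refl unfolding cls_def by auto
  then have "rep (cls g) \<in> cls g"
    unfolding rep_def by (rule someI)
  then show "wf_fg (rep (cls g))" and "iso_fg g (rep (cls g))"
    unfolding cls_def by auto
qed

lemma cls_rep_cls: "wf_fg g \<Longrightarrow> cls (rep (cls g)) = cls g"
  using cls_eq_iff iso_fg_sym rep_cls by metis

lemma card_auts_pos: "wf_fg g \<Longrightarrow> 0 < card (auts g)"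
  using iso_fg_iff_isos[of g g] iso_fg_refl finite_isos by (auto simp: auts_eq_isos card_gt_0_iff)

lemma bij_betw_postcompose_isos:
  assumes "wf_fg g" and "wf_fg h" and "p \<in> isos g h"
  shows "bij_betw (compose {0..<nv g} p) (auts g) (isos g h)"
proof -
  define A where "A = {0..<nv g}"
  have p: "p \<in> A \<rightarrow> {0..<nv h}" "bij_betw p A {0..<nv h}"
    using assms(3) unfolding isos_def A_def by auto
  show ?thesis
    unfolding A_def[symmetric]
  proof (rule bij_betw_byWitness[where f' = "compose A (inv_iso g h p)"])
    show "\<forall>q\<in>auts g. compose A (inv_iso g h p) (compose A p q) = q"
    proof
      fix q assume "q \<in> auts g"
      then have q: "q \<in> A \<rightarrow> A" "q \<in> extensional A"
        unfolding auts_def A_def by (auto simp: PiE_iff)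
      have "compose A (inv_iso g h p) (compose A p q) = compose A (compose A (inv_iso g h p) p) q"
        using q(1) by (rule compose_assoc)
      also have "\<dots> = q"
        using q by (simp add: inv_iso_def A_def[symmetric] compose_inv_into_id[OF p(2)] Id_compose)
      finally show "compose A (inv_iso g h p) (compose A p q) = q" .
    qed
    show "\<forall>r\<in>isos g h. compose A p (compose A (inv_iso g h p) r) = r"
    proof
      fix r assume "r \<in> isos g h"
      then have r: "r \<in> A \<rightarrow> {0..<nv h}" "r \<in> extensional A"
        unfolding isos_def A_def by (auto simp: PiE_iff)
      have "compose A p (compose A (inv_iso g h p) r) = compose A (compose {0..<nv h} p (inv_iso g h p)) r"
        using r(1) by (rule compose_assoc)
      also have "\<dots> = r"
        using r p by (simp add: inv_iso_def A_def[symmetric] compose_id_inv_into bij_betw_def Id_compose)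
      finally show "compose A p (compose A (inv_iso g h p) r) = r" .
    qed
    show "compose A p ` auts g \<subseteq> isos g h"
      using compose_isos[OF assms(1) _ assms(3)] by (auto simp: auts_eq_isos A_def)
    show "compose A (inv_iso g h p) ` isos g h \<subseteq> auts g"
      using compose_isos[OF assms(1) _ inv_iso_isos[OF assms]] by (auto simp: auts_eq_isos A_def)
  qed
qed

lemma bij_betw_precompose_isos:
  assumes "wf_fg g" and "wf_fg h" and "p \<in> isos g h"
  shows "bij_betw (\<lambda>q. compose {0..<nv g} q p) (auts h) (isos g h)"
proof -
  define A B where "A = {0..<nv g}" and "B = {0..<nv h}"
  have p: "p \<in> A \<rightarrow> B" "bij_betw p A B"
    using assms(3) unfolding isos_def A_def B_def by auto
  have p_inv: "inv_iso g h p \<in> B \<rightarrow> A"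
    using inv_into_funcset[of p A B] p(2) unfolding inv_iso_def A_def B_def by (simp add: bij_betw_def)
  show ?thesis
    unfolding A_def[symmetric]
  proof (rule bij_betw_byWitness[where f' = "\<lambda>r. compose B r (inv_iso g h p)"])
    show "\<forall>q\<in>auts h. compose B (compose A q p) (inv_iso g h p) = q"
    proof
      fix q assume "q \<in> auts h"
      then have q: "q \<in> B \<rightarrow> B" "q \<in> extensional B"
        unfolding auts_def B_def by (auto simp: PiE_iff)
      have "compose B (compose A q p) (inv_iso g h p) = compose B q (compose B p (inv_iso g h p))"
        using p_inv by (rule compose_assoc[symmetric])
      also have "\<dots> = q"
        using q p by (simp add: inv_iso_def A_def[symmetric] B_def[symmetric]
            compose_id_inv_into bij_betw_def compose_Id)
      finally show "compose B (compose A q p) (inv_iso g h p) = q" .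
    qed
    show "\<forall>r\<in>isos g h. compose A (compose B r (inv_iso g h p)) p = r"
    proof
      fix r assume "r \<in> isos g h"
      then have r: "r \<in> A \<rightarrow> B" "r \<in> extensional A"
        unfolding isos_def A_def B_def by (auto simp: PiE_iff)
      have "compose A (compose B r (inv_iso g h p)) p = compose A r (compose A (inv_iso g h p) p)"
        using p(1) by (rule compose_assoc[symmetric])
      also have "\<dots> = r"
        using r by (simp add: inv_iso_def A_def[symmetric] B_def[symmetric]
            compose_inv_into_id[OF p(2)] compose_Id)
      finally show "compose A (compose B r (inv_iso g h p)) p = r" .
    qed
    show "(\<lambda>q. compose A q p) ` auts h \<subseteq> isos g h"
      using compose_isos[OF assms(1) assms(3)] by (auto simp: auts_eq_isos A_def)
    show "(\<lambda>r. compose B r (inv_iso g h p)) ` isos g h \<subseteq> auts h"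
      using compose_isos[OF assms(2) inv_iso_isos[OF assms]] by (auto simp: auts_eq_isos B_def)
  qed
qed

lemma card_isos_source:
  assumes "wf_fg g" and "wf_fg h"
  shows "card (isos g h) = (if iso_fg g h then card (auts g) else 0)"
  using bij_betw_same_card[OF bij_betw_postcompose_isos[OF assms]] iso_fg_iff_isos[OF assms(1)]
  by auto

lemma card_isos_target:
  assumes "wf_fg g" and "wf_fg h"
  shows "card (isos g h) = (if iso_fg g h then card (auts h) else 0)"
  using bij_betw_same_card[OF bij_betw_precompose_isos[OF assms]] iso_fg_iff_isos[OF assms(1)]
  by auto

section \<open>Moving a free edge\<close>

definition add_free :: "'c fg \<Rightarrow> nat \<Rightarrow> 'c fg" where
  "add_free g v = FG (nv g) (out g) (dec g) ((fr g)(v := fr g v + 1))"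

lemma add_free_sel [simp]:
  "nv (add_free g v) = nv g" "out (add_free g v) = out g" "dec (add_free g v) = dec g"
  "fr (add_free g v) = (fr g)(v := fr g v + 1)"
  by (simp_all add: add_free_def)

lemma remove_free_sel [simp]:
  "nv (remove_free g v) = nv g" "out (remove_free g v) = out g" "dec (remove_free g v) = dec g"
  "fr (remove_free g v) = (fr g)(v := fr g v - 1)"
  by (simp_all add: remove_free_def)

lemma wf_fg_add_free [simp]: "wf_fg (add_free g v) \<longleftrightarrow> wf_fg g"
  by (simp add: wf_fg_def)

lemma wf_fg_remove_free [simp]: "wf_fg (remove_free g v) \<longleftrightarrow> wf_fg g"
  by (simp add: wf_fg_def)

lemma preserves_add_free_iff:
  assumes "inj_on p {0..<nv g}" and "u < nv g"
  shows "preserves g (add_free h (p u)) p \<longleftrightarrow> 0 < fr g u \<and> preserves (remove_free g u) h p"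
proof -
  have "p w = p u \<longleftrightarrow> w = u" if "w < nv g" for w
    using assms that by (auto dest: inj_onD)
  then show ?thesis
    using assms(2) unfolding preserves_def by (auto split: if_splits)
qed

lemma isos_add_free_iff:
  assumes "u < nv g"
  shows "p \<in> isos g (add_free h (p u)) \<longleftrightarrow> 0 < fr g u \<and> p \<in> isos (remove_free g u) h"
  using preserves_add_free_iff[OF _ assms] unfolding isos_def by (auto simp: bij_betw_def)

lemma iso_fg_add_remove_free:
  assumes "iso_fg g h" and "v < nv g"
  obtains w where "w < nv h" and "iso_fg (add_free g v) (add_free h w)"
    and "iso_fg (remove_free g v) (remove_free h w)"
proof -
  obtain p where p: "nv g = nv h" "bij_betw p {0..<nv g} {0..<nv h}" "preserves g h p"
    using assms(1) unfolding iso_fg_def by auto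
  have "p w = p v \<longleftrightarrow> w = v" if "w < nv g" for w
    using p(2) assms(2) that by (auto simp: bij_betw_def dest: inj_onD)
  then have "preserves (add_free g v) (add_free h (p v)) p"
    and "preserves (remove_free g v) (remove_free h (p v)) p"
    using p(3) assms(2) unfolding preserves_def by auto
  then show ?thesis
    using that[of "p v"] p assms(2) bij_betwE unfolding iso_fg_def by fastforce
qed

lemma bij_betw_move_free_edge:
  "bij_betw (\<lambda>(u, p). (p u, p))
     (SIGMA u:{u. u < nv g \<and> 0 < fr g u}. isos (remove_free g u) h)
     (SIGMA v:{0..<nv h}. isos g (add_free h v))"
proof (rule bij_betw_byWitness[where f' = "\<lambda>(v, p). (inv_into {0..<nv g} p v, p)"])
  show "\<forall>x\<in>(SIGMA u:{u. u < nv g \<and> 0 < fr g u}. isos (remove_free g u) h).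
      (\<lambda>(v, p). (inv_into {0..<nv g} p v, p)) ((\<lambda>(u, p). (p u, p)) x) = x"
    unfolding isos_def by (auto simp: bij_betw_def)
  show "\<forall>x\<in>(SIGMA v:{0..<nv h}. isos g (add_free h v)).
      (\<lambda>(u, p). (p u, p)) ((\<lambda>(v, p). (inv_into {0..<nv g} p v, p)) x) = x"
    unfolding isos_def by (auto simp: bij_betw_def f_inv_into_f)
  show "(\<lambda>(u, p). (p u, p)) ` (SIGMA u:{u. u < nv g \<and> 0 < fr g u}. isos (remove_free g u) h)
      \<subseteq> (SIGMA v:{0..<nv h}. isos g (add_free h v))"
  proof (rule image_subsetI)
    fix x assume "x \<in> (SIGMA u:{u. u < nv g \<and> 0 < fr g u}. isos (remove_free g u) h)"
    then obtain u p where x: "x = (u, p)" "u < nv g" "0 < fr g u" "p \<in> isos (remove_free g u) h"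
      by auto
    then have "p u < nv h"
      unfolding isos_def by (auto simp: PiE_mem)
    moreover have "p \<in> isos g (add_free h (p u))"
      using isos_add_free_iff x(2-4) by blast
    ultimately show "(\<lambda>(u, p). (p u, p)) x \<in> (SIGMA v:{0..<nv h}. isos g (add_free h v))"
      using x(1) by simp
  qed
  show "(\<lambda>(v, p). (inv_into {0..<nv g} p v, p)) ` (SIGMA v:{0..<nv h}. isos g (add_free h v))
      \<subseteq> (SIGMA u:{u. u < nv g \<and> 0 < fr g u}. isos (remove_free g u) h)"
  proof (rule image_subsetI)
    fix x assume "x \<in> (SIGMA v:{0..<nv h}. isos g (add_free h v))"
    then obtain v p where x: "x = (v, p)" "v < nv h" "p \<in> isos g (add_free h v)"
      by auto
    then have "v \<in> p ` {0..<nv g}"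
      unfolding isos_def bij_betw_def by simp
    then have u: "inv_into {0..<nv g} p v < nv g" "p (inv_into {0..<nv g} p v) = v"
      using inv_into_into[of v p "{0..<nv g}"] by (simp_all add: f_inv_into_f)
    then show "(\<lambda>(v, p). (inv_into {0..<nv g} p v, p)) x
        \<in> (SIGMA u:{u. u < nv g \<and> 0 < fr g u}. isos (remove_free g u) h)"
      using x isos_add_free_iff[OF u(1), of p h] by simp
  qed
qed

lemma remove_free_add_free_double_count:
  assumes "wf_fg g" and "wf_fg h"
  shows "card {u. u < nv g \<and> 0 < fr g u \<and> iso_fg (remove_free g u) h} * card (auts h)
       = card {v. v < nv h \<and> iso_fg g (add_free h v)} * card (auts g)"
proof -
  have "card {u. u < nv g \<and> 0 < fr g u \<and> iso_fg (remove_free g u) h} * card (auts h)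
      = (\<Sum>u\<in>{u. u < nv g \<and> 0 < fr g u}. if iso_fg (remove_free g u) h then card (auts h) else 0)"
    by (simp add: sum.inter_filter[symmetric] conj_assoc)
  also have "\<dots> = card (SIGMA u:{u. u < nv g \<and> 0 < fr g u}. isos (remove_free g u) h)"
    by (simp add: card_isos_target assms finite_isos)
  also have "\<dots> = card (SIGMA v:{0..<nv h}. isos g (add_free h v))"
    using bij_betw_move_free_edge by (rule bij_betw_same_card)
  also have "\<dots> = card {v. v < nv h \<and> iso_fg g (add_free h v)} * card (auts g)"
    using assms by (simp add: finite_isos card_isos_source sum.inter_filter[symmetric])
  finally show ?thesis .
qed

section \<open>The monomial of a graph and the transpose derivation\<close>

definition vertex_label :: "'c fg \<Rightarrow> nat \<Rightarrow> 'c \<times> int" where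
  "vertex_label g v = (dec g v, int (indeg g v + fr g v) - 1)"

lemma Phi_eq_card_vertex_label: "Phi g x = card {v. v < nv g \<and> vertex_label g v = x}"
  by (cases x) (simp add: Phi_def vertex_label_def)

lemma card_Collect_bij_betw:
  fixes n m :: nat
  assumes "bij_betw p {0..<n} {0..<m}" and "\<And>v. v < n \<Longrightarrow> Q (p v) \<longleftrightarrow> P v"
  shows "card {w. w < m \<and> Q w} = card {v. v < n \<and> P v}"
proof -
  have "{w. w < m \<and> Q w} = p ` {v. v < n \<and> P v}"
  proof
    show "p ` {v. v < n \<and> P v} \<subseteq> {w. w < m \<and> Q w}"
      using assms(2) bij_betw_apply[OF assms(1)] by auto
    show "{w. w < m \<and> Q w} \<subseteq> p ` {v. v < n \<and> P v}"
    proof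
      fix w assume w: "w \<in> {w. w < m \<and> Q w}"
      then have "w \<in> p ` {0..<n}"
        using assms(1) by (simp add: bij_betw_def)
      then show "w \<in> p ` {v. v < n \<and> P v}"
        using w assms(2) by auto
    qed
  qed
  moreover have "inj_on p {v. v < n \<and> P v}"
    using bij_betw_imp_inj_on[OF assms(1)] by (rule inj_on_subset) auto
  ultimately show ?thesis
    by (simp add: card_image)
qed

lemma Phi_iso:
  assumes "wf_fg g" and "iso_fg g h"
  shows "Phi g = Phi h"
proof -
  obtain p where p: "nv g = nv h" "bij_betw p {0..<nv g} {0..<nv h}" "preserves g h p"
    using assms(2) unfolding iso_fg_def by auto
  have inj: "inj_on p {0..<nv g}"
    using p(2) by (rule bij_betw_imp_inj_on)
  have out: "out h (p w) = Some (p v) \<longleftrightarrow> out g w = Some v" if "w < nv g" "v < nv g" for v w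
  proof -
    have "out h (p w) = map_option p (out g w)"
      using p(3) that unfolding preserves_def by auto
    then show ?thesis
      using assms(1) that inj unfolding wf_fg_def by (cases "out g w") (auto dest: inj_onD)
  qed
  have "indeg h (p v) = indeg g v" if "v < nv g" for v
    unfolding indeg_def using card_Collect_bij_betw[OF p(2)] out that by simp
  then have "vertex_label h (p v) = vertex_label g v" if "v < nv g" for v
    using p(3) that unfolding preserves_def vertex_label_def by simp
  then show ?thesis
    unfolding fun_eq_iff Phi_eq_card_vertex_label using card_Collect_bij_betw[OF p(2)] by simp
qed

lemma card_fiber_fun_upd:
  fixes n :: nat
  assumes "v < n"
  shows "card {w. w < n \<and> (f(v := y)) w = x} + of_bool (f v = x)
       = card {w. w < n \<and> f w = x} + of_bool (y = x)"
proof -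
  have "card {w. w < n \<and> F w = x} = card {w. w < n \<and> w \<noteq> v \<and> F w = x} + of_bool (F v = x)"
    for F
  proof (cases "F v = x")
    case True
    then have "{w. w < n \<and> F w = x} = insert v {w. w < n \<and> w \<noteq> v \<and> F w = x}"
      using assms by auto
    moreover have "finite {w. w < n \<and> w \<noteq> v \<and> F w = x}"
      by (rule finite_subset[of _ "{..<n}"]) auto
    ultimately show ?thesis
      using True by simp
  next
    case False
    then have "{w. w < n \<and> F w = x} = {w. w < n \<and> w \<noteq> v \<and> F w = x}"
      by auto
    then show ?thesis
      using False by simp
  qed
  note split = this
  have "{w. w < n \<and> w \<noteq> v \<and> (f(v := y)) w = x} = {w. w < n \<and> w \<noteq> v \<and> f w = x}"
    by auto
  with split[of "f(v := y)"] split[of f] show ?thesis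
    unfolding fun_upd_same by simp
qed

lemma indeg_add_free [simp]: "indeg (add_free g v) = indeg g"
  unfolding indeg_def by simp

(* Stated additively because of truncated subtraction: v moves from label (dec g v, j - 1)
   to (dec g v, j). *)
lemma Phi_add_free:
  assumes "v < nv g"
  defines "j \<equiv> int (indeg g v + fr g v)"
  shows "Phi (add_free g v) x + of_bool ((dec g v, j - 1) = x) = Phi g x + of_bool ((dec g v, j) = x)"
proof -
  have "vertex_label (add_free g v) = (vertex_label g)(v := (dec g v, j))"
    by (auto simp: vertex_label_def j_def)
  moreover have "vertex_label g v = (dec g v, j - 1)"
    by (simp add: vertex_label_def j_def)
  ultimately show ?thesis
    using card_fiber_fun_upd[OF assms(1), of "vertex_label g"]
    by (simp add: Phi_eq_card_vertex_label)
qed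

lemma shift_Phi_add_free:
  assumes "v < nv g"
  defines "j \<equiv> int (indeg g v + fr g v)"
  shows "shift (Phi (add_free g v)) (dec g v) j = Phi g" and "0 < Phi (add_free g v) (dec g v, j)"
proof -
  note H = Phi_add_free[OF assms(1), folded j_def]
  show "0 < Phi (add_free g v) (dec g v, j)"
    using H[of "(dec g v, j)"] by simp
  show "shift (Phi (add_free g v)) (dec g v) j = Phi g"
  proof
    fix x
    show "shift (Phi (add_free g v)) (dec g v) j x = Phi g x"
      using H[of x] H[of "(dec g v, j)"] H[of "(dec g v, j - 1)"] by (auto simp: shift_def)
  qed
qed

lemma shift_inj:
  assumes "0 < k (a, j)" and "0 < k' (a, j)" and "shift k a j = shift k' a j"
  shows "k = k'"
proof
  fix x
  have "shift k a j x = shift k' a j x" and "shift k a j (a, j) = shift k' a j (a, j)"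
    using assms(3) by simp_all
  then show "k x = k' x"
    using assms(1,2) unfolding shift_def by (auto split: if_splits)
qed

lemma shift_eq_shift_imp_eq:
  assumes "0 < k (b, i)" and "shift k a j = shift k b i"
  shows "(a, j) = (b, i)"
proof (rule ccontr)
  assume "(a, j) \<noteq> (b, i)"
  moreover have "shift k a j (a, j - 1) = shift k b i (a, j - 1)"
    using assms(2) by simp
  ultimately show False
    using assms(1) unfolding shift_def by (auto split: if_splits)
qed

lemma mfact_fun_upd:
  assumes "finite {y. k y \<noteq> 0}"
  shows "mfact (k(x := m)) * fact (k x) = mfact k * fact m"
proof -
  define W where "W = insert x {y. k y \<noteq> 0}"
  have W: "finite W" "x \<in> W"
    using assms by (simp_all add: W_def)
  have mfact_W: "mfact k' = (\<Prod>y\<in>W. fact (k' y))" if "{y. k' y \<noteq> 0} \<subseteq> W" for k'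
    unfolding mfact_def using W(1) that by (intro prod.mono_neutral_left) auto
  have "mfact (k(x := m)) = (\<Prod>y\<in>W. fact ((k(x := m)) y))"
    by (rule mfact_W) (auto simp: W_def)
  also have "\<dots> = fact m * (\<Prod>y\<in>W - {x}. fact ((k(x := m)) y))"
    by (simp add: prod.remove[OF W])
  also have "(\<Prod>y\<in>W - {x}. fact ((k(x := m)) y)) = (\<Prod>y\<in>W - {x}. fact (k y))"
    by (rule prod.cong) auto
  finally have "mfact (k(x := m)) = fact m * (\<Prod>y\<in>W - {x}. fact (k y))" .
  moreover have "mfact k = (\<Prod>y\<in>W. fact (k y))"
    by (rule mfact_W) (auto simp: W_def)
  then have "mfact k = fact (k x) * (\<Prod>y\<in>W - {x}. fact (k y))"
    by (simp add: prod.remove[OF W])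
  ultimately show ?thesis
    by simp
qed

lemma mfact_shift:
  assumes "finite {y. k y \<noteq> 0}" and "0 < k (a, j)"
  shows "mfact k * shift k a j (a, j - 1) = k (a, j) * mfact (shift k a j)"
proof -
  obtain m where m: "k (a, j) = Suc m"
    using assms(2) gr0_implies_Suc by blast
  define k1 where "k1 = k((a, j) := m)"
  define c where "c = k (a, j - 1)"
  have shift: "shift k a j = k1((a, j - 1) := c + 1)" and c: "k1 (a, j - 1) = c"
    by (simp_all add: shift_def k1_def c_def m fun_upd_twist)
  have "finite {y. k1 y \<noteq> 0}"
    by (rule finite_subset[of _ "insert (a, j) {y. k y \<noteq> 0}"]) (use assms(1) in \<open>auto simp: k1_def\<close>)
  from mfact_fun_upd[OF this, of "(a, j - 1)" "c + 1"]
  have "mfact (shift k a j) * fact c = mfact k1 * (c + 1) * fact c"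
    by (simp add: shift c algebra_simps)
  then have shift_fact: "mfact (shift k a j) = mfact k1 * (c + 1)"
    by simp
  from mfact_fun_upd[OF assms(1), of "(a, j)" m]
  have "mfact k1 * Suc m * fact m = mfact k * fact m"
    by (simp add: k1_def m algebra_simps)
  then have "mfact k = mfact k1 * Suc m"
    by simp
  then have "mfact k * shift k a j (a, j - 1) = Suc m * (mfact k1 * (c + 1))"
    by (simp add: shift algebra_simps)
  also have "\<dots> = k (a, j) * mfact (shift k a j)"
    by (simp add: shift_fact m)
  finally show ?thesis .
qed

lemma dbar_mono_shift:
  assumes "0 \<le> j" and "0 < k (a, j)"
  shows "dbar_mono k (shift k a j) = of_nat (k (a, j))"
proof -
  have "{(b, i). 0 \<le> i \<and> 0 < k (b, i) \<and> shift k a j = shift k b i} = {(a, j)}"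
    using assms by (auto dest: shift_eq_shift_imp_eq)
  then show ?thesis
    unfolding dbar_mono_def by simp
qed

lemma dbar_mono_not_shift:
  assumes "\<nexists>a j. 0 \<le> j \<and> 0 < k (a, j) \<and> K = shift k a j"
  shows "dbar_mono k K = 0"
proof -
  have no_shift: "{(a, j). 0 \<le> j \<and> 0 < k (a, j) \<and> K = shift k a j} = {}"
    using assms by blast
  show ?thesis
    unfolding dbar_mono_def no_shift by simp
qed

lemma Phi_add_free_eq_iff:
  assumes "v < nv g"
  defines "j \<equiv> int (indeg g v + fr g v)"
  shows "Phi (add_free g v) = k \<longleftrightarrow> 0 < k (dec g v, j) \<and> Phi g = shift k (dec g v) j"
proof
  assume "Phi (add_free g v) = k"
  then show "0 < k (dec g v, j) \<and> Phi g = shift k (dec g v) j"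
    using shift_Phi_add_free[OF assms(1)] unfolding j_def by simp
next
  assume "0 < k (dec g v, j) \<and> Phi g = shift k (dec g v) j"
  then show "Phi (add_free g v) = k"
    using shift_Phi_add_free[OF assms(1)] shift_inj[of "Phi (add_free g v)" "dec g v" j k]
    unfolding j_def by simp
qed

lemma mfact_mult_card_Phi_add_free:
  assumes "finite {x. k x \<noteq> 0}"
  shows "of_nat (mfact k) * of_nat (card {v. v < nv g \<and> Phi (add_free g v) = k})
       = dbar_mono k (Phi g) * (of_nat (mfact (Phi g)) :: 'k::comm_ring_1)"
proof (cases "\<exists>a j. 0 \<le> j \<and> 0 < k (a, j) \<and> Phi g = shift k a j")
  case True
  then obtain a j where aj: "0 \<le> j" "0 < k (a, j)" "Phi g = shift k a j"
    by blast
  have "Phi (add_free g v) = k \<longleftrightarrow> vertex_label g v = (a, j - 1)" if "v < nv g" for v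
    using Phi_add_free_eq_iff[OF that] aj shift_eq_shift_imp_eq[of k]
    unfolding vertex_label_def by auto
  then have "card {v. v < nv g \<and> Phi (add_free g v) = k} = Phi g (a, j - 1)"
    unfolding Phi_eq_card_vertex_label by (intro arg_cong[where f = card]) auto
  then have "mfact k * card {v. v < nv g \<and> Phi (add_free g v) = k} = k (a, j) * mfact (Phi g)"
    using mfact_shift[OF assms aj(2)] aj(3) by simp
  then have "of_nat (mfact k) * of_nat (card {v. v < nv g \<and> Phi (add_free g v) = k})
      = (of_nat (k (a, j)) * of_nat (mfact (Phi g)) :: 'k)"
    by (metis of_nat_mult)
  moreover have "dbar_mono k (Phi g) = (of_nat (k (a, j)) :: 'k)"
    using dbar_mono_shift[OF aj(1), of k a] aj(2,3) by simp
  ultimately show ?thesis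
    by simp
next
  case False
  have no_vertex: "{v. v < nv g \<and> Phi (add_free g v) = k} = {}"
  proof (intro equalityI subsetI)
    fix v assume "v \<in> {v. v < nv g \<and> Phi (add_free g v) = k}"
    then have "0 < k (dec g v, int (indeg g v + fr g v))
        \<and> Phi g = shift k (dec g v) (int (indeg g v + fr g v))"
      using Phi_add_free_eq_iff by blast
    then show "v \<in> {}"
      using False of_nat_0_le_iff by blast
  qed simp
  moreover have "dbar_mono k (Phi g) = (0 :: 'k)"
    using dbar_mono_not_shift[OF False] .
  ultimately show ?thesis
    by (simp only: no_vertex card.empty of_nat_0 mult_zero_right mult_zero_left)
qed

lemma dbar_mono_support:
  "{K. (dbar_mono k K :: 'k::comm_ring_1) \<noteq> 0} \<subseteq> (\<lambda>(a, j). shift k a j) ` {x. k x \<noteq> 0}"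
proof
  fix K assume "K \<in> {K. (dbar_mono k K :: 'k) \<noteq> 0}"
  then have "(dbar_mono k K :: 'k) \<noteq> 0"
    by simp
  then obtain a j where "0 < k (a, j)" "K = shift k a j"
    using dbar_mono_not_shift by meson
  then show "K \<in> (\<lambda>(a, j). shift k a j) ` {x. k x \<noteq> 0}"
    by (intro image_eqI[where x = "(a, j)"]) auto
qed

lemma fin_supp_dbar_mono:
  assumes "finite {x. k x \<noteq> 0}"
  shows "fin_supp (dbar_mono k :: _ \<Rightarrow> 'k::comm_ring_1)"
  unfolding fin_supp_def using assms by (intro finite_subset[OF dbar_mono_support]) simp

section \<open>Finitely many classes per monomial\<close>

lemma vertex_label_in_support:
  assumes "v < nv g"
  shows "0 < Phi g (vertex_label g v)"
  using assms by (auto simp: Phi_eq_card_vertex_label card_gt_0_iff)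

lemma nv_le_sum_Phi:
  assumes "finite {x. Phi g x \<noteq> 0}"
  shows "nv g \<le> (\<Sum>x\<in>{x. Phi g x \<noteq> 0}. Phi g x)"
proof -
  let ?U = "\<Union>x\<in>{x. Phi g x \<noteq> 0}. {v. v < nv g \<and> vertex_label g v = x}"
  have "{0..<nv g} \<subseteq> ?U"
  proof
    fix v assume "v \<in> {0..<nv g}"
    then show "v \<in> ?U"
      using vertex_label_in_support[of v g] by (intro UN_I[of "vertex_label g v"]) auto
  qed
  moreover have "finite ?U"
    using assms by (rule finite_UN_I) simp
  ultimately have "card {0..<nv g} \<le> card ?U"
    by (intro card_mono)
  then have "nv g \<le> card ?U"
    by simp
  also have "\<dots> \<le> (\<Sum>x\<in>{x. Phi g x \<noteq> 0}. card {v. v < nv g \<and> vertex_label g v = x})"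
    by (rule card_UN_le[OF assms])
  also have "\<dots> = (\<Sum>x\<in>{x. Phi g x \<noteq> 0}. Phi g x)"
    by (rule sum.cong[OF refl]) (simp add: Phi_eq_card_vertex_label)
  finally show ?thesis .
qed

lemma fr_le_sum_Phi:
  assumes "finite {x. Phi g x \<noteq> 0}" and "v < nv g"
  shows "fr g v \<le> (\<Sum>x\<in>{x. Phi g x \<noteq> 0}. nat (snd x + 1))"
proof -
  have "fr g v \<le> nat (snd (vertex_label g v) + 1)"
    by (simp add: vertex_label_def)
  also have "\<dots> \<le> (\<Sum>x\<in>{x. Phi g x \<noteq> 0}. nat (snd x + 1))"
    using vertex_label_in_support[OF assms(2)] by (intro member_le_sum assms(1)) auto
  finally show ?thesis .
qed

(* Values outside the vertex set do not affect isomorphism; cutting them off leaves finitely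
   many graphs of bounded size. *)
definition restrict_fg :: "'c fg \<Rightarrow> 'c fg" where
  "restrict_fg g = FG (nv g) (restrict (out g) {0..<nv g}) (restrict (dec g) {0..<nv g})
     (restrict (fr g) {0..<nv g})"

lemma cls_restrict_fg: "cls (restrict_fg g) = cls g"
proof -
  have "preserves (restrict_fg g) h p = preserves g h p" for h p
    unfolding preserves_def restrict_fg_def by auto
  then show ?thesis
    unfolding cls_def iso_fg_def by (simp add: restrict_fg_def)
qed

lemma finite_restrict_fg_bounded:
  fixes N M :: nat
  shows "finite {restrict_fg g | g :: ('c::finite) fg. wf_fg g \<and> nv g \<le> N \<and> (\<forall>v<nv g. fr g v \<le> M)}"
proof -
  let ?codes = "SIGMA n:{..N}. ({0..<n} \<rightarrow>\<^sub>E insert None (Some ` {0..<n}))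
    \<times> ({0..<n} \<rightarrow>\<^sub>E (UNIV :: 'c set)) \<times> ({0..<n} \<rightarrow>\<^sub>E {0..M})"
  have codes: "finite ?codes"
    by (intro finite_SigmaI finite_cartesian_product finite_PiE) auto
  have "{restrict_fg g | g. wf_fg g \<and> nv g \<le> N \<and> (\<forall>v<nv g. fr g v \<le> M)}
      \<subseteq> (\<lambda>(n, o', d, f). FG n o' d f) ` ?codes" (is "_ \<subseteq> ?image")
  proof clarify
    fix g :: "'c fg" assume g: "wf_fg g" "nv g \<le> N" "\<forall>v<nv g. fr g v \<le> M"
    have "out g v \<in> insert None (Some ` {0..<nv g})" if "v < nv g" for v
      using g(1) that unfolding wf_fg_def by (cases "out g v") auto
    then have "restrict (out g) {0..<nv g} \<in> {0..<nv g} \<rightarrow>\<^sub>E insert None (Some ` {0..<nv g})"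
      and "restrict (dec g) {0..<nv g} \<in> {0..<nv g} \<rightarrow>\<^sub>E (UNIV :: 'c set)"
      and "restrict (fr g) {0..<nv g} \<in> {0..<nv g} \<rightarrow>\<^sub>E {0..M}"
      using g(3) unfolding restrict_PiE_iff by auto
    then have "(nv g, restrict (out g) {0..<nv g}, restrict (dec g) {0..<nv g}, restrict (fr g) {0..<nv g})
        \<in> ?codes"
      using g(2) by (intro SigmaI) simp_all
    then show "restrict_fg g \<in> ?image"
      by (rule rev_image_eqI) (simp add: restrict_fg_def)
  qed
  then show ?thesis
    by (rule finite_subset[OF _ finite_imageI[OF codes]])
qed

lemma finite_cls_Phi:
  fixes k :: "('c::finite) expo"
  assumes "finite {x. k x \<noteq> 0}"
  shows "finite {T. \<exists>g. wf_fg g \<and> Phi g = k \<and> T = cls g}"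
proof -
  define N M where "N = (\<Sum>x\<in>{x. k x \<noteq> 0}. k x)" and "M = (\<Sum>x\<in>{x. k x \<noteq> 0}. nat (snd x + 1))"
  have "{T. \<exists>g. wf_fg g \<and> Phi g = k \<and> T = cls g}
      \<subseteq> cls ` {restrict_fg g | g. wf_fg g \<and> nv g \<le> N \<and> (\<forall>v<nv g. fr g v \<le> M)}"
  proof
    fix T assume "T \<in> {T. \<exists>g. wf_fg g \<and> Phi g = k \<and> T = cls g}"
    then obtain g where "wf_fg g" "Phi g = k" "T = cls g"
      by blast
    then have "wf_fg g \<and> nv g \<le> N \<and> (\<forall>v<nv g. fr g v \<le> M)"
      using nv_le_sum_Phi[of g] fr_le_sum_Phi[of g] assms unfolding N_def M_def by auto
    then have "restrict_fg g \<in> {restrict_fg g | g. wf_fg g \<and> nv g \<le> N \<and> (\<forall>v<nv g. fr g v \<le> M)}"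
      by (intro CollectI exI[of _ g]) simp
    then show "T \<in> cls ` {restrict_fg g | g. wf_fg g \<and> nv g \<le> N \<and> (\<forall>v<nv g. fr g v \<le> M)}"
      by (rule rev_image_eqI) (simp add: cls_restrict_fg \<open>T = cls g\<close>)
  qed
  then show ?thesis
    by (rule finite_subset[OF _ finite_imageI[OF finite_restrict_fg_bounded]])
qed

section \<open>Classes closed under changing free edges\<close>

locale free_edge_closed =
  fixes B :: "('c::finite) fg \<Rightarrow> bool"
  assumes wf_fg_if: "B g \<Longrightarrow> wf_fg g"
    and add_free_iff: "B (add_free g v) \<longleftrightarrow> B g"
    and remove_free_iff: "B (remove_free g v) \<longleftrightarrow> B g"
begin

definition is_class :: "'c fg set \<Rightarrow> bool" where
  "is_class T \<longleftrightarrow> (\<exists>g. B g \<and> T = cls g)"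

lemma is_class_rep:
  assumes "is_class T"
  shows "wf_fg (rep T)" and "cls (rep T) = T"
proof -
  obtain g where "B g" "T = cls g"
    using assms unfolding is_class_def by blast
  moreover have "wf_fg g"
    using wf_fg_if[OF \<open>B g\<close>] .
  ultimately show "wf_fg (rep T)" and "cls (rep T) = T"
    using rep_cls(1) cls_rep_cls by simp_all
qed

lemma is_class_add_remove_free:
  assumes "is_class T" and "u < nv (rep T)"
  shows "is_class (cls (add_free (rep T) u))" and "is_class (cls (remove_free (rep T) u))"
proof -
  obtain g where g: "B g" "T = cls g"
    using assms(1) unfolding is_class_def by blast
  then have "iso_fg (rep T) g"
    using iso_fg_sym[OF wf_fg_if rep_cls(1) rep_cls(2)] wf_fg_if by simp
  then obtain w where "iso_fg (add_free (rep T) u) (add_free g w)"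
    and "iso_fg (remove_free (rep T) u) (remove_free g w)"
    using assms(2) by (rule iso_fg_add_remove_free)
  moreover have "wf_fg (rep T)" "wf_fg g"
    using is_class_rep(1)[OF assms(1)] wf_fg_if[OF g(1)] .
  ultimately have "cls (add_free (rep T) u) = cls (add_free g w)"
    and "cls (remove_free (rep T) u) = cls (remove_free g w)"
    using cls_eq_iff[of "add_free (rep T) u" "add_free g w"]
      cls_eq_iff[of "remove_free (rep T) u" "remove_free g w"] by simp_all
  then show "is_class (cls (add_free (rep T) u))" and "is_class (cls (remove_free (rep T) u))"
    using g(1) add_free_iff remove_free_iff unfolding is_class_def by blast+
qed

definition jaro_mono :: "'c expo \<Rightarrow> 'c fg set \<Rightarrow> 'k::field" where
  "jaro_mono k T = (if is_class T \<and> Phi (rep T) = k then of_nat (mfact k) / of_nat (sigma T) else 0)"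

lemma finite_is_class_Phi:
  assumes "finite {x. k x \<noteq> 0}"
  shows "finite {T. is_class T \<and> Phi (rep T) = k}"
  by (rule finite_subset[OF _ finite_cls_Phi[OF assms]]) (use is_class_rep in blast)

lemma fin_supp_jaro_mono:
  assumes "finite {x. k x \<noteq> 0}"
  shows "fin_supp (jaro_mono k)"
  unfolding fin_supp_def
  by (rule finite_subset[OF _ finite_is_class_Phi[OF assms]]) (auto simp: jaro_mono_def split: if_splits)

lemma delta_cls_to_non_class:
  assumes "is_class T" and "\<not> is_class T'"
  shows "delta_cls T T' = 0"
proof -
  have no_vertex: "{v. v < nv (rep T) \<and> 0 < fr (rep T) v \<and> cls (remove_free (rep T) v) = T'} = {}"
    using is_class_add_remove_free(2)[OF assms(1)] assms(2) by auto
  show ?thesis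
    unfolding delta_cls_def no_vertex by simp
qed

lemma jaro_mono_mult_delta_cls:
  assumes "is_class T" and "is_class T'" and "Phi (rep T) = k"
  shows "jaro_mono k T * delta_cls T T' = (of_nat (mfact k) / of_nat (sigma T')
           * of_nat (card {v. v < nv (rep T') \<and> cls (add_free (rep T') v) = T}) :: 'f::field_char_0)"
proof -
  define g g' where "g = rep T" and "g' = rep T'"
  have wf: "wf_fg g" "wf_fg g'" and cls: "cls g = T" "cls g' = T'"
    using is_class_rep assms(1,2) unfolding g_def g'_def by blast+
  have "cls (remove_free g u) = T' \<longleftrightarrow> iso_fg (remove_free g u) g'" for u
    using cls_eq_iff[of "remove_free g u" g'] wf cls by simp
  moreover have "cls (add_free g' v) = T \<longleftrightarrow> iso_fg g (add_free g' v)" for v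
    using cls_eq_iff[of g "add_free g' v"] wf cls by auto
  ultimately have delta: "delta_cls T T' = of_nat (card {u. u < nv g \<and> 0 < fr g u \<and> iso_fg (remove_free g u) g'})"
    and add_free_set: "{v. v < nv g' \<and> cls (add_free g' v) = T} = {v. v < nv g' \<and> iso_fg g (add_free g' v)}"
    unfolding delta_cls_def g_def[symmetric] by simp_all
  have "jaro_mono k T * delta_cls T T' = of_nat (mfact k)
      * (of_nat (card {u. u < nv g \<and> 0 < fr g u \<and> iso_fg (remove_free g u) g'}) / of_nat (card (auts g)) :: 'f)"
    using assms(1,3) unfolding jaro_mono_def delta sigma_def g_def[symmetric] by simp
  also have "\<dots> = of_nat (mfact k)
      * (of_nat (card {v. v < nv g' \<and> iso_fg g (add_free g' v)}) / of_nat (card (auts g')))"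
  proof -
    have "card (auts g) \<noteq> 0" "card (auts g') \<noteq> 0"
      using card_auts_pos wf by (simp_all add: gr0_conv_Suc)
    then have "(of_nat (card {u. u < nv g \<and> 0 < fr g u \<and> iso_fg (remove_free g u) g'}) :: 'f)
        / of_nat (card (auts g))
      = of_nat (card {v. v < nv g' \<and> iso_fg g (add_free g' v)}) / of_nat (card (auts g'))"
      using remove_free_add_free_double_count[OF wf] by (simp add: frac_eq_eq flip: of_nat_mult)
    then show ?thesis
      by (simp only:)
  qed
  finally show ?thesis
    unfolding sigma_def g'_def[symmetric] add_free_set by simp
qed

lemma lin_ext_delta_cls_jaro_mono:
  assumes "finite {x. k x \<noteq> 0}" and "is_class T'"
  shows "lin_ext delta_cls (jaro_mono k) T' = (of_nat (mfact k) / of_nat (sigma T')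
           * of_nat (card {v. v < nv (rep T') \<and> Phi (add_free (rep T') v) = k}) :: 'f::field_char_0)"
proof -
  define S where "S = {T. is_class T \<and> Phi (rep T) = k}"
  define V where "V T = {v. v < nv (rep T') \<and> cls (add_free (rep T') v) = T}" for T
  have "finite S"
    unfolding S_def using finite_is_class_Phi[OF assms(1)] .
  have "lin_ext delta_cls (jaro_mono k) T' = (\<Sum>T\<in>S. jaro_mono k T * delta_cls T T' :: 'f)"
    by (rule lin_ext_eq_sum[OF \<open>finite S\<close>]) (auto simp: S_def jaro_mono_def split: if_splits)
  also have "\<dots> = (\<Sum>T\<in>S. of_nat (mfact k) / of_nat (sigma T') * of_nat (card (V T)))"
    using jaro_mono_mult_delta_cls assms(2) by (intro sum.cong) (auto simp: S_def V_def)
  also have "\<dots> = of_nat (mfact k) / of_nat (sigma T') * of_nat (\<Sum>T\<in>S. card (V T))"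
    by (simp add: sum_distrib_left)
  also have "(\<Sum>T\<in>S. card (V T)) = card (\<Union>T\<in>S. V T)"
    by (rule card_UN_disjoint[symmetric]) (auto simp: V_def \<open>finite S\<close>)
  also have "(\<Union>T\<in>S. V T) = {v. v < nv (rep T') \<and> Phi (add_free (rep T') v) = k}"
  proof -
    have "cls (add_free (rep T') v) \<in> S \<longleftrightarrow> Phi (add_free (rep T') v) = k" if "v < nv (rep T')" for v
    proof -
      have "wf_fg (add_free (rep T') v)"
        using is_class_rep(1)[OF assms(2)] by simp
      then have "Phi (rep (cls (add_free (rep T') v))) = Phi (add_free (rep T') v)"
        using Phi_iso rep_cls by metis
      then show ?thesis
        using is_class_add_remove_free(1)[OF assms(2) that] unfolding S_def by simp
    qed
    then show ?thesis
      unfolding V_def by blast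
  qed
  finally show ?thesis .
qed

lemma lin_ext_jaro_mono_dbar_mono:
  assumes "finite {x. k x \<noteq> 0}" and "is_class T'"
  shows "lin_ext jaro_mono (dbar_mono k) T'
    = (dbar_mono k (Phi (rep T')) * (of_nat (mfact (Phi (rep T'))) / of_nat (sigma T')) :: 'f::field_char_0)"
proof -
  define K where "K = Phi (rep T')"
  define A where "A = insert K ((\<lambda>(a, j). shift k a j) ` {x. k x \<noteq> 0})"
  have "finite A"
    using assms(1) by (simp add: A_def)
  have "lin_ext jaro_mono (dbar_mono k) T' = (\<Sum>K'\<in>A. dbar_mono k K' * jaro_mono K' T' :: 'f)"
    by (rule lin_ext_eq_sum[OF \<open>finite A\<close>]) (use dbar_mono_support in \<open>auto simp: A_def\<close>)
  also have "\<dots> = (\<Sum>K'\<in>A. if K' = K then dbar_mono k K * (of_nat (mfact K) / of_nat (sigma T')) else 0)"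
    using assms(2) by (intro sum.cong) (auto simp: jaro_mono_def K_def)
  also have "\<dots> = dbar_mono k K * (of_nat (mfact K) / of_nat (sigma T'))"
    using \<open>finite A\<close> by (simp add: A_def)
  finally show ?thesis
    unfolding K_def .
qed

lemma delta_jaro_mono_eq_jaro_dbar_mono:
  assumes "finite {x. k x \<noteq> 0}"
  shows "lin_ext delta_cls (jaro_mono k) = (lin_ext jaro_mono (dbar_mono k) :: _ \<Rightarrow> 'f::field_char_0)"
proof
  fix T'
  show "lin_ext delta_cls (jaro_mono k) T' = (lin_ext jaro_mono (dbar_mono k) T' :: 'f)"
  proof (cases "is_class T'")
    case True
    define n where "n = card {v. v < nv (rep T') \<and> Phi (add_free (rep T') v) = k}"
    have count: "of_nat (mfact k) * of_nat n = (dbar_mono k (Phi (rep T')) * of_nat (mfact (Phi (rep T'))) :: 'f)"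
      unfolding n_def by (rule mfact_mult_card_Phi_add_free[OF assms])
    have "lin_ext delta_cls (jaro_mono k) T' = (of_nat (mfact k) * of_nat n / of_nat (sigma T') :: 'f)"
      using lin_ext_delta_cls_jaro_mono[OF assms True] unfolding n_def by simp
    also have "\<dots> = dbar_mono k (Phi (rep T')) * of_nat (mfact (Phi (rep T'))) / of_nat (sigma T')"
      unfolding count ..
    also have "\<dots> = lin_ext jaro_mono (dbar_mono k) T'"
      unfolding lin_ext_jaro_mono_dbar_mono[OF assms True] by simp
    finally show ?thesis .
  next
    case False
    have "lin_ext delta_cls (jaro_mono k) T' = (0 :: 'f)"
      unfolding lin_ext_def
      by (intro sum.neutral ballI) (simp add: jaro_mono_def delta_cls_to_non_class[OF _ False] split: if_splits)
    moreover have "lin_ext jaro_mono (dbar_mono k) T' = (0 :: 'f)"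
      unfolding lin_ext_def by (intro sum.neutral ballI) (simp add: jaro_mono_def False)
    ultimately show ?thesis
      by simp
  qed
qed

lemma delta_jaro_eq_jaro_dbar:
  fixes L :: "'c expo \<Rightarrow> 'f::field_char_0"
  assumes "fin_supp L" and "\<And>k. L k \<noteq> 0 \<Longrightarrow> finite {x. k x \<noteq> 0}"
  shows "lin_ext delta_cls (lin_ext jaro_mono L) = lin_ext jaro_mono (lin_ext dbar_mono L)"
proof -
  have "lin_ext delta_cls (lin_ext jaro_mono L) = lin_ext (\<lambda>k. lin_ext delta_cls (jaro_mono k)) L"
    by (rule lin_ext_lin_ext[OF assms(1) fin_supp_jaro_mono[OF assms(2)]])
  also have "\<dots> = lin_ext (\<lambda>k. lin_ext jaro_mono (dbar_mono k)) L"
    by (rule lin_ext_cong) (rule delta_jaro_mono_eq_jaro_dbar_mono[OF assms(2)])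
  also have "\<dots> = lin_ext jaro_mono (lin_ext dbar_mono L)"
    by (rule lin_ext_lin_ext[OF assms(1) fin_supp_dbar_mono[OF assms(2)], symmetric])
  finally show ?thesis .
qed

end

interpretation aroma: free_edge_closed is_aroma
  by unfold_locales (auto simp: is_aroma_def wf_fg_def connected_fg_def adj_def)

interpretation tree: free_edge_closed is_tree
  by unfold_locales (auto simp: is_tree_def wf_fg_def connected_fg_def adj_def)

lemma jaro0_mono_eq: "jaro0_mono = aroma.jaro_mono"
  unfolding jaro0_mono_def aroma.jaro_mono_def aroma.is_class_def is_aroma_class_def ..

lemma jaro1_mono_eq: "jaro1_mono = tree.jaro_mono"
  unfolding jaro1_mono_def tree.jaro_mono_def tree.is_class_def is_tree_class_def ..

lemma in_M_fin_supp: "in_M m L \<Longrightarrow> fin_supp L"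
  unfolding in_M_def fin_supp_def by simp

lemma in_M_monomial_finite: "in_M m L \<Longrightarrow> L k \<noteq> 0 \<Longrightarrow> finite {x. k x \<noteq> 0}"
  unfolding in_M_def is_monom_def by simp

theorem corollary4p9:
  fixes L0 L1 :: "('c::finite) expo \<Rightarrow> 'k::field_char_0"
  assumes "in_M 0 L0" and "in_M (-1) L1"
  shows "delta (jaro0 L0) = jaro0 (dbar L0) \<and> delta (jaro1 L1) = jaro1 (dbar L1)"
  unfolding delta_def jaro0_def jaro1_def dbar_def jaro0_mono_eq jaro1_mono_eq
  using aroma.delta_jaro_eq_jaro_dbar[OF in_M_fin_supp in_M_monomial_finite, OF assms(1) assms(1)]
    tree.delta_jaro_eq_jaro_dbar[OF in_M_fin_supp in_M_monomial_finite, OF assms(2) assms(2)]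
  by simp

end
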